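(* Let $k \ge 1$, $m = 4k+4$, $\theta = 2\pi/m$, and let $P$ be a finite point set in general position. For any two vertices $u, w \in P$, let $M$ be the midpoint of the side of $T_{uw}$ opposite $u$ and let $\alpha$ be the unsigned angle between $uw$ and $uM$. Then the $\theta_m$-graph on $P$ contains a path from $u$ to $w$ of length at most $$\left(\frac{\cos\alpha}{\cos(\theta/2)} + \frac{\cos\alpha\tan(\theta/2) + \sin\alpha}{\cos(\theta/2) - \sin(\theta/2)}\right)|uw|.$$
   Context: Cones: for $m \ge 2$, $\theta = 2\pi/m$; around each point $u$ draw $m$ rays with consecutive angular separation $\theta$, oriented so the vertical upward ray from $u$ bisects a cone $C_0^u$; cones numbered $C_0^u,\dots,C_{m-1}^u$ clockwise, same orientation at every point. General position: no two points on a line parallel to a cone boundary ray, no two on a line perpendicular to a cone bisector, no three collinear. The $\theta_m$-graph on $P$: for each $u\in P$ and each cone $C_i^u$ containing another point of $P$, add an edge from $u$ to the point of $C_i^u$ whose orthogonal projection onto the bisector of $C_i^u$ is closest to $u$; edges weighted by Euclidean length. Canonical triangle: if $w$ lies in cone $C$ of $u$, $T_{uw}$ is the triangle bounded by the two boundary rays of $C$ and the line through $w$ perpendicular to the bisector of $C$. *)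

theory Defs
  imports "HOL-Analysis.Analysis"
begin

definition cone_angle :: "nat \<Rightarrow> real" where
  "cone_angle m = 2 * pi / real m"

text \<open>Direction (angle, counterclockwise from the positive x-axis) of the bisector of cone i.
  Cone 0 is bisected by the vertical upward ray, cones numbered clockwise.\<close>
definition bisector_angle :: "nat \<Rightarrow> nat \<Rightarrow> real" where
  "bisector_angle m i = pi / 2 - real i * cone_angle m"

definition bisector_dir :: "nat \<Rightarrow> nat \<Rightarrow> complex" where
  "bisector_dir m i = cis (bisector_angle m i)"

definition bdry_dir1 :: "nat \<Rightarrow> nat \<Rightarrow> complex" where
  "bdry_dir1 m i = cis (bisector_angle m i - cone_angle m / 2)"

definition bdry_dir2 :: "nat \<Rightarrow> nat \<Rightarrow> complex" where
  "bdry_dir2 m i = cis (bisector_angle m i + cone_angle m / 2)"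

definition in_cone :: "nat \<Rightarrow> nat \<Rightarrow> complex \<Rightarrow> complex \<Rightarrow> bool" where
  "in_cone m i u v \<longleftrightarrow> v \<noteq> u \<and>
     (\<exists>a b. a \<ge> 0 \<and> b \<ge> 0 \<and> v - u = of_real a * bdry_dir1 m i + of_real b * bdry_dir2 m i)"

definition proj_len :: "nat \<Rightarrow> nat \<Rightarrow> complex \<Rightarrow> complex \<Rightarrow> real" where
  "proj_len m i u v = (v - u) \<bullet> bisector_dir m i"

definition parallel :: "complex \<Rightarrow> complex \<Rightarrow> bool" where
  "parallel x y \<longleftrightarrow> Im (cnj x * y) = 0"

definition collinear3 :: "complex \<Rightarrow> complex \<Rightarrow> complex \<Rightarrow> bool" where
  "collinear3 a b c \<longleftrightarrow> parallel (b - a) (c - a)"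

definition general_position :: "nat \<Rightarrow> complex set \<Rightarrow> bool" where
  "general_position m P \<longleftrightarrow>
     (\<forall>p\<in>P. \<forall>q\<in>P. p \<noteq> q \<longrightarrow>
        (\<forall>i<m. \<not> parallel (q - p) (bdry_dir1 m i) \<and> \<not> parallel (q - p) (bdry_dir2 m i)
                 \<and> (q - p) \<bullet> bisector_dir m i \<noteq> 0)) \<and>
     (\<forall>a\<in>P. \<forall>b\<in>P. \<forall>c\<in>P. a \<noteq> b \<and> a \<noteq> c \<and> b \<noteq> c \<longrightarrow> \<not> collinear3 a b c)"

definition theta_dedge :: "nat \<Rightarrow> complex set \<Rightarrow> complex \<Rightarrow> complex \<Rightarrow> bool" where
  "theta_dedge m P u v \<longleftrightarrow> u \<in> P \<and> v \<in> P \<and>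
     (\<exists>i<m. in_cone m i u v \<and>
        (\<forall>w\<in>P. in_cone m i u w \<longrightarrow> proj_len m i u v \<le> proj_len m i u w))"

definition theta_edge :: "nat \<Rightarrow> complex set \<Rightarrow> complex \<Rightarrow> complex \<Rightarrow> bool" where
  "theta_edge m P u v \<longleftrightarrow> theta_dedge m P u v \<or> theta_dedge m P v u"

definition is_theta_path :: "nat \<Rightarrow> complex set \<Rightarrow> complex list \<Rightarrow> complex \<Rightarrow> complex \<Rightarrow> bool" where
  "is_theta_path m P ps u w \<longleftrightarrow> ps \<noteq> [] \<and> hd ps = u \<and> last ps = w \<and>
     (\<forall>j. Suc j < length ps \<longrightarrow> theta_edge m P (ps ! j) (ps ! Suc j))"

definition path_length :: "complex list \<Rightarrow> real" where
  "path_length ps = sum_list (map (\<lambda>(a, b). dist a b) (zip ps (tl ps)))"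

text \<open>Canonical triangle T_uw for w in cone C_i^u: vertices u and the two intersections
  of the boundary rays with the line through w perpendicular to the bisector.\<close>
definition canon_far1 :: "nat \<Rightarrow> nat \<Rightarrow> complex \<Rightarrow> complex \<Rightarrow> complex" where
  "canon_far1 m i u w = u + of_real (proj_len m i u w / cos (cone_angle m / 2)) * bdry_dir1 m i"

definition canon_far2 :: "nat \<Rightarrow> nat \<Rightarrow> complex \<Rightarrow> complex \<Rightarrow> complex" where
  "canon_far2 m i u w = u + of_real (proj_len m i u w / cos (cone_angle m / 2)) * bdry_dir2 m i"

definition canonical_triangle :: "nat \<Rightarrow> nat \<Rightarrow> complex \<Rightarrow> complex \<Rightarrow> complex set" where
  "canonical_triangle m i u w = convex hull {u, canon_far1 m i u w, canon_far2 m i u w}"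

definition uangle :: "complex \<Rightarrow> complex \<Rightarrow> real" where
  "uangle x y = arccos ((x \<bullet> y) / (norm x * norm y))"

end

theory Submission
  imports Defs
begin

text \<open>Measure the displacement from \<open>u\<close> to \<open>w\<close> in the \<open>\<ell>\<^sub>1\<close> norm of the frame aligned with the
  bisector of a cone containing \<open>w\<close>. Because \<open>m = 4 * K\<close>, the frames of all cones
  differ by multiples of \<open>pi / (2 * K)\<close>, and for a vector inside a cone its own frame gives the
  smallest \<open>\<ell>\<^sub>1\<close> norm. Routing greedily, the edge from \<open>u\<close> to the point \<open>a\<close> of the cone with
  nearest projection costs \<open>|ua|\<close> and lowers this \<open>\<ell>\<^sub>1\<close> distance to \<open>w\<close> by at least
  \<open>(cos (\<theta>/2) - sin (\<theta>/2)) * |ua|\<close>, so induction yields a path of length at most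
  \<open>(Y + |X|) / (cos (\<theta>/2) - sin (\<theta>/2))\<close>, where \<open>(Y, X)\<close> are the coordinates of \<open>w - u\<close> along and
  across the bisector. Since \<open>Y = |uw| cos \<alpha>\<close> and \<open>|X| = |uw| sin \<alpha>\<close>, this is exactly the stated bound.\<close>

lemma sin_le_sin_between:
  fixes A x :: real
  assumes "0 \<le> A" "A \<le> pi / 2" "A \<le> x" "x \<le> pi - A"
  shows "sin A \<le> sin x"
proof (cases "x \<le> pi / 2")
  case True
  then show ?thesis using assms by (intro sin_monotone_2pi_le) auto
next
  case False
  have "sin A \<le> sin (pi - x)" using assms False by (intro sin_monotone_2pi_le) auto
  then show ?thesis by simp
qed

lemma abs_sin_add_int_mult_pi: "\<bar>sin (x + of_int q * pi)\<bar> = \<bar>sin x\<bar>"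
proof -
  have "sin (x + of_int q * pi) = sin x * cos (pi * of_int q) + cos x * sin (pi * of_int q)"
    by (simp add: sin_add mult.commute)
  then show ?thesis by (auto simp: abs_mult)
qed

text \<open>A shift by a nonzero multiple of \<open>pi / K\<close> (mod \<open>pi\<close>) moves \<open>x\<close> into
  \<open>[pi / (2 * K), pi - pi / (2 * K)]\<close>, where \<open>\<bar>sin\<bar>\<close> is at least \<open>sin (pi / (2 * K)) \<ge> \<bar>sin x\<bar>\<close>.\<close>
lemma abs_sin_le_abs_sin_shift:
  fixes K :: nat and N :: int and x :: real
  assumes K: "K \<ge> 1" and x: "\<bar>x\<bar> \<le> pi / (2 * K)"
  shows "\<bar>sin x\<bar> \<le> \<bar>sin (x + of_int N * (pi / K))\<bar>"
proof -
  define q where "q = N div int K"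
  define r where "r = N mod int K"
  have r: "0 \<le> r" "r < int K" using K unfolding r_def by auto
  have Kp: "real K > 0" using K by simp
  have "N = q * int K + r" unfolding q_def r_def by simp
  then have shift: "x + of_int N * (pi / K) = (x + of_int r * (pi / K)) + of_int q * pi"
    using Kp by (simp add: field_simps)
  have "\<bar>sin x\<bar> \<le> \<bar>sin (x + of_int r * (pi / K))\<bar>"
  proof (cases "r = 0")
    case True
    then show ?thesis by simp
  next
    case False
    then have r1: "1 \<le> real_of_int r" "real_of_int r \<le> real K - 1" using r by linarith+
    have A: "0 \<le> pi / (2 * K)" "pi / (2 * K) \<le> pi / 2"
      using K by (simp, intro divide_left_mono) auto
    have half: "pi / K = pi / (2 * K) + pi / (2 * K)" using Kp by (simp add: field_simps)
    have "1 * (pi / K) \<le> of_int r * (pi / K)" "of_int r * (pi / K) \<le> (real K - 1) * (pi / K)"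
      using r1 Kp by (intro mult_right_mono; simp)+
    moreover have "(real K - 1) * (pi / K) = pi - pi / K" using Kp by (simp add: field_simps)
    ultimately have "pi / (2 * K) \<le> x + of_int r * (pi / K)"
                    "x + of_int r * (pi / K) \<le> pi - pi / (2 * K)"
      using x half by linarith+
    then have lower: "sin (pi / (2 * K)) \<le> sin (x + of_int r * (pi / K))"
      using A by (intro sin_le_sin_between) auto
    have "\<bar>sin x\<bar> = sin \<bar>x\<bar>"
      using x A sin_ge_zero[of x] sin_ge_zero[of "- x"] by (cases "x \<ge> 0") auto
    also have "\<dots> \<le> sin (pi / (2 * K))"
      using x A by (intro sin_monotone_2pi_le) auto
    finally show ?thesis using lower by linarith
  qed
  then show ?thesis unfolding shift abs_sin_add_int_mult_pi .
qed

lemma abs_cos_add_abs_sin_squared: "(\<bar>cos (x::real)\<bar> + \<bar>sin x\<bar>)\<^sup>2 = 1 + \<bar>sin (2 * x)\<bar>"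
proof -
  have "(\<bar>cos x\<bar> + \<bar>sin x\<bar>)\<^sup>2 = (cos x)\<^sup>2 + (sin x)\<^sup>2 + 2 * \<bar>sin x * cos x\<bar>"
    by (simp add: power2_eq_square abs_mult algebra_simps)
  also have "\<dots> = 1 + \<bar>sin (2 * x)\<bar>" by (simp add: sin_double abs_mult)
  finally show ?thesis .
qed

lemma cos_add_abs_sin_le_shift:
  fixes K :: nat and N :: int and \<phi> :: real
  assumes K: "K \<ge> 1" and \<phi>: "\<bar>\<phi>\<bar> \<le> pi / (4 * K)"
  shows "cos \<phi> + \<bar>sin \<phi>\<bar> \<le> \<bar>cos (\<phi> + of_int N * (pi / (2 * K)))\<bar> + \<bar>sin (\<phi> + of_int N * (pi / (2 * K)))\<bar>"
proof -
  define \<psi> where "\<psi> = \<phi> + of_int N * (pi / (2 * K))"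
  have Kp: "real K > 0" using K by simp
  have "pi / (4 * K) \<le> pi / 2" using K by (intro divide_left_mono) auto
  then have "cos \<phi> \<ge> 0" using \<phi> by (intro cos_ge_zero) auto
  then have lhs: "cos \<phi> + \<bar>sin \<phi>\<bar> = \<bar>cos \<phi>\<bar> + \<bar>sin \<phi>\<bar>" by simp
  have "\<bar>2 * \<phi>\<bar> \<le> pi / (2 * K)" using \<phi> Kp by (simp add: field_simps abs_mult)
  moreover have "2 * \<psi> = 2 * \<phi> + of_int N * (pi / K)" unfolding \<psi>_def using Kp by (simp add: field_simps)
  ultimately have "\<bar>sin (2 * \<phi>)\<bar> \<le> \<bar>sin (2 * \<psi>)\<bar>" using abs_sin_le_abs_sin_shift[OF K] by metis
  then have "(\<bar>cos \<phi>\<bar> + \<bar>sin \<phi>\<bar>)\<^sup>2 \<le> (\<bar>cos \<psi>\<bar> + \<bar>sin \<psi>\<bar>)\<^sup>2"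
    unfolding abs_cos_add_abs_sin_squared by simp
  then show ?thesis unfolding lhs \<psi>_def[symmetric] by (rule power2_le_imp_le) simp
qed

lemma l1_le_l1_mult_cis:
  fixes K :: nat and N :: int and z :: complex
  assumes K: "K \<ge> 1" and re: "0 < Re z" and im: "\<bar>Im z\<bar> \<le> Re z * tan (pi / (4 * K))"
  shows "\<bar>Re z\<bar> + \<bar>Im z\<bar> \<le> \<bar>Re (z * cis (of_int N * (pi / (2 * K))))\<bar>
                               + \<bar>Im (z * cis (of_int N * (pi / (2 * K))))\<bar>"
proof -
  define \<phi> where "\<phi> = Arg z"
  define t where "t = of_int N * (pi / (2 * K))"
  have h: "0 < pi / (4 * K)" "pi / (4 * K) < pi / 2" using K by (auto simp: divide_less_eq)
  have "\<bar>Im z / Re z\<bar> \<le> tan (pi / (4 * K))"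
    using im re by (simp add: abs_div pos_divide_le_eq mult.commute)
  then have "arctan \<bar>Im z / Re z\<bar> \<le> arctan (tan (pi / (4 * K)))"
    by (simp add: arctan_le_iff)
  also have "\<dots> = pi / (4 * K)" using h by (intro arctan_tan) auto
  finally have \<phi>: "\<bar>\<phi>\<bar> \<le> pi / (4 * K)"
    unfolding \<phi>_def arg_conv_arctan[OF re] by (simp add: abs_arctan)
  have z: "z = of_real (cmod z) * cis \<phi>"
    unfolding \<phi>_def using rcis_cmod_Arg[of z] by (simp add: rcis_def)
  have "Re z = cmod z * cos \<phi>" "Im z = cmod z * sin \<phi>"
    by (subst z; simp)+
  then have "\<bar>Re z\<bar> + \<bar>Im z\<bar> = cmod z * (cos \<phi> + \<bar>sin \<phi>\<bar>)"
    using re by (simp add: abs_mult distrib_left zero_less_mult_iff)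
  also have "\<dots> \<le> cmod z * (\<bar>cos (\<phi> + t)\<bar> + \<bar>sin (\<phi> + t)\<bar>)"
    unfolding t_def using cos_add_abs_sin_le_shift[OF K \<phi>] by (intro mult_left_mono) auto
  also have "\<dots> = \<bar>Re (z * cis t)\<bar> + \<bar>Im (z * cis t)\<bar>"
    by (subst (1 2) z) (simp add: mult.assoc cis_mult abs_mult distrib_left)
  finally show ?thesis unfolding t_def .
qed

lemma cone_angle_mult_4: "m = 4 * K \<Longrightarrow> cone_angle m = pi / (2 * K)"
  unfolding cone_angle_def by simp

lemma half_cone_angle_bounds:
  assumes "2 < m"
  shows "0 < cone_angle m / 2" "cone_angle m / 2 < pi / 2"
  using assms by (auto simp: cone_angle_def divide_less_eq)

lemma cos_half_cone_angle_pos: "2 < m \<Longrightarrow> 0 < cos (cone_angle m / 2)"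
  using half_cone_angle_bounds[of m] by (intro cos_gt_zero) auto

lemma sin_half_cone_angle_pos: "2 < m \<Longrightarrow> 0 < sin (cone_angle m / 2)"
  using half_cone_angle_bounds[of m] by (intro sin_gt_zero) auto

lemma sin_less_cos_half_cone_angle:
  assumes "4 < m"
  shows "sin (cone_angle m / 2) < cos (cone_angle m / 2)"
proof -
  have "2 < m" using assms by simp
  have "cone_angle m / 2 < pi / 4" using assms by (simp add: cone_angle_def divide_less_eq)
  then have "cos (pi / 2 - cone_angle m / 2) < cos (cone_angle m / 2)"
    using half_cone_angle_bounds[OF \<open>2 < m\<close>] by (subst cos_mono_less_eq) auto
  then show ?thesis by (simp add: sin_cos_eq)
qed

definition cone_rot :: "nat \<Rightarrow> nat \<Rightarrow> complex \<Rightarrow> complex" where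
  "cone_rot m i d = d * cis (- bisector_angle m i)"

definition cone_l1 :: "nat \<Rightarrow> nat \<Rightarrow> complex \<Rightarrow> real" where
  "cone_l1 m i d = \<bar>Re (cone_rot m i d)\<bar> + \<bar>Im (cone_rot m i d)\<bar>"

lemma inner_bisector_dir: "d \<bullet> bisector_dir m i = Re (cone_rot m i d)"
  unfolding cone_rot_def bisector_dir_def inner_complex_def by (simp add: cos_minus sin_minus)

lemma proj_len_eq_Re_cone_rot: "proj_len m i u v = Re (cone_rot m i (v - u))"
  unfolding proj_len_def inner_bisector_dir ..

lemma cone_rot_diff: "cone_rot m i (a - b) = cone_rot m i a - cone_rot m i b"
  unfolding cone_rot_def by (simp add: algebra_simps)

lemma norm_cone_rot [simp]: "cmod (cone_rot m i d) = cmod d"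
  unfolding cone_rot_def by (simp add: norm_mult)

lemma norm_le_cone_l1: "cmod d \<le> cone_l1 m i d"
  unfolding cone_l1_def using cmod_le[of "cone_rot m i d"] by simp

lemma cone_rot_change_cone:
  "cone_rot m i d = cone_rot m j d * cis (of_int (int i - int j) * cone_angle m)"
  unfolding cone_rot_def bisector_angle_def by (simp add: mult.assoc cis_mult algebra_simps)

lemma in_cone_cone_rot:
  assumes "in_cone m i u v"
  obtains a b where "0 \<le> a" "0 \<le> b" "0 < a + b" "cmod (v - u) \<le> a + b"
    "Re (cone_rot m i (v - u)) = (a + b) * cos (cone_angle m / 2)"
    "Im (cone_rot m i (v - u)) = (b - a) * sin (cone_angle m / 2)"
proof -
  define h where "h = cone_angle m / 2"
  obtain a b where ab: "0 \<le> a" "0 \<le> b" "v - u = of_real a * bdry_dir1 m i + of_real b * bdry_dir2 m i"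
    using assms unfolding in_cone_def by blast
  have rot: "cone_rot m i (v - u) = of_real a * cis (- h) + of_real b * cis h"
    unfolding ab(3) cone_rot_def bdry_dir1_def bdry_dir2_def h_def
    by (simp add: distrib_right mult.assoc cis_mult)
  have "cmod (v - u) \<le> cmod (of_real a * cis (- h)) + cmod (of_real b * cis h)"
    using norm_triangle_ineq[of "of_real a * cis (- h)" "of_real b * cis h"]
    by (simp flip: rot)
  then have "cmod (v - u) \<le> a + b" using ab by (simp add: norm_mult)
  moreover have "\<not> (a = 0 \<and> b = 0)" using ab(3) assms unfolding in_cone_def by auto
  then have "0 < a + b" using ab by linarith
  ultimately show ?thesis using that ab rot unfolding h_def by (simp add: algebra_simps)
qed

lemma Re_cone_rot_pos: "2 < m \<Longrightarrow> in_cone m i u v \<Longrightarrow> 0 < Re (cone_rot m i (v - u))"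
  by (elim in_cone_cone_rot) (simp add: cos_half_cone_angle_pos)

lemma abs_Im_cone_rot_le:
  assumes "2 < m" "in_cone m i u v"
  shows "\<bar>Im (cone_rot m i (v - u))\<bar> \<le> Re (cone_rot m i (v - u)) * tan (cone_angle m / 2)"
proof -
  obtain a b where ab: "0 \<le> a" "0 \<le> b"
    "Re (cone_rot m i (v - u)) = (a + b) * cos (cone_angle m / 2)"
    "Im (cone_rot m i (v - u)) = (b - a) * sin (cone_angle m / 2)"
    using in_cone_cone_rot[OF assms(2)] by metis
  have "\<bar>b - a\<bar> * sin (cone_angle m / 2) \<le> (a + b) * sin (cone_angle m / 2)"
    using ab sin_half_cone_angle_pos[OF assms(1)] by (intro mult_right_mono) auto
  then show ?thesis
    using ab cos_half_cone_angle_pos[OF assms(1)] sin_half_cone_angle_pos[OF assms(1)]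
    by (simp add: tan_def abs_mult)
qed

lemma cone_l1_le_cone_l1:
  assumes mK: "m = 4 * K" and K: "K \<ge> 1" and cone: "in_cone m j u v"
  shows "cone_l1 m j (v - u) \<le> cone_l1 m i (v - u)"
proof -
  have m: "2 < m" using mK K by simp
  have h: "cone_angle m / 2 = pi / (4 * K)" "cone_angle m = pi / (2 * K)"
    using cone_angle_mult_4[OF mK] by simp_all
  show ?thesis
    unfolding cone_l1_def cone_rot_change_cone[of m i _ j] h(2)
    using l1_le_l1_mult_cis[OF K Re_cone_rot_pos[OF m cone]] abs_Im_cone_rot_le[OF m cone]
    unfolding h(1) by blast
qed

lemma cis_conic_combination:
  fixes h \<phi> :: real
  assumes h: "0 < h" "h < pi / 2" and \<phi>: "\<bar>\<phi>\<bar> \<le> h"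
  obtains a b where "0 \<le> a" "0 \<le> b" "cis \<phi> = of_real a * cis (- h) + of_real b * cis h"
proof -
  have c: "cos h > 0" using h by (intro cos_gt_zero) auto
  have s: "sin h > 0" using h by (intro sin_gt_zero) auto
  define a where "a = (cos \<phi> / cos h - sin \<phi> / sin h) / 2"
  define b where "b = (cos \<phi> / cos h + sin \<phi> / sin h) / 2"
  have "sin (h - \<phi>) \<ge> 0" using h \<phi> by (intro sin_ge_zero) auto
  then have "0 \<le> a" unfolding a_def sin_diff using c s by (simp add: field_simps)
  moreover have "sin (h + \<phi>) \<ge> 0" using h \<phi> by (intro sin_ge_zero) auto
  then have "0 \<le> b" unfolding b_def sin_add using c s by (simp add: field_simps)
  moreover have "cis \<phi> = of_real a * cis (- h) + of_real b * cis h"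
    unfolding a_def b_def using c s by (simp add: complex_eq_iff field_simps)
  ultimately show ?thesis using that by blast
qed

text \<open>The cone index is obtained by rounding the angle between the bisector of cone \<open>0\<close> and
  \<open>v - u\<close> to the nearest multiple of the cone angle.\<close>
lemma ex_in_cone:
  assumes m: "2 < m" and vu: "v \<noteq> u"
  obtains j where "j < m" "in_cone m j u v"
proof -
  define \<theta> where "\<theta> = cone_angle m"
  have \<theta>: "0 < \<theta>" "real m * \<theta> = 2 * pi"
    unfolding \<theta>_def cone_angle_def using m by simp_all
  define \<beta> where "\<beta> = Arg (v - u)"
  define r where "r = cmod (v - u)"
  have vr: "v - u = of_real r * cis \<beta>"
    unfolding r_def \<beta>_def using rcis_cmod_Arg[of "v - u"] by (simp add: rcis_def)
  define n where "n = \<lfloor>(pi / 2 - \<beta>) / \<theta> + 1 / 2\<rfloor>"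
  define q where "q = n div int m"
  define j where "j = nat (n mod int m)"
  have "j < m" unfolding j_def using m by (simp add: nat_less_iff)
  have j: "real j = real_of_int n - real_of_int q * real m"
  proof -
    obtain s where s: "s = n mod int m" "0 \<le> s" using m by simp
    then have "n = q * int m + s" unfolding q_def by simp
    then show ?thesis unfolding j_def s(1)[symmetric] using s(2) by simp
  qed
  define \<phi> where "\<phi> = \<beta> - pi / 2 + real_of_int n * \<theta>"
  have "\<bar>real_of_int n - (pi / 2 - \<beta>) / \<theta>\<bar> \<le> 1 / 2"
    unfolding n_def by linarith
  then have "\<bar>\<phi>\<bar> * (1 / \<theta>) \<le> 1 / 2"
    unfolding \<phi>_def using \<theta> by (simp add: field_simps abs_mult)
  then have \<phi>: "\<bar>\<phi>\<bar> \<le> cone_angle m / 2"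
    unfolding \<theta>_def[symmetric] using \<theta> by (simp add: field_simps)
  obtain a b where ab: "0 \<le> a" "0 \<le> b"
      "cis \<phi> = of_real a * cis (- (cone_angle m / 2)) + of_real b * cis (cone_angle m / 2)"
    using cis_conic_combination[OF half_cone_angle_bounds[OF m] \<phi>] by blast
  have "\<beta> = (bisector_angle m j + \<phi>) + 2 * pi * (- real_of_int q)"
    unfolding bisector_angle_def \<theta>_def[symmetric] \<phi>_def j \<theta>(2)[symmetric] by (simp add: algebra_simps)
  then have "cis \<beta> = cis (bisector_angle m j + \<phi>) * cis (2 * pi * (- real_of_int q))"
    by (simp only: cis_mult)
  moreover have "cis (2 * pi * (- real_of_int q)) = 1" by (rule cis_multiple_2pi) simp
  ultimately have "cis \<beta> = cis (bisector_angle m j) * cis \<phi>"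
    by (simp only: mult_1_right flip: cis_mult)
  then have "v - u = of_real (r * a) * bdry_dir1 m j + of_real (r * b) * bdry_dir2 m j"
    unfolding vr bdry_dir1_def bdry_dir2_def ab(3) by (simp add: algebra_simps cis_mult)
  moreover have "0 \<le> r * a" "0 \<le> r * b" unfolding r_def using ab by auto
  ultimately have "in_cone m j u v" unfolding in_cone_def using vu by blast
  then show ?thesis using that \<open>j < m\<close> by blast
qed

lemma cone_l1_nearest_step:
  assumes mK: "m = 4 * K" and K: "2 \<le> K"
    and ua: "in_cone m i u a" and aw: "in_cone m j a w"
    and near: "proj_len m i u a \<le> proj_len m i u w"
  shows "(cos (cone_angle m / 2) - sin (cone_angle m / 2)) * dist u a + cone_l1 m j (w - a)
           \<le> cone_l1 m i (w - u)"
proof -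
  define c where "c = cos (cone_angle m / 2)"
  define s where "s = sin (cone_angle m / 2)"
  have cs: "0 < s" "s < c"
    unfolding c_def s_def using mK K sin_half_cone_angle_pos sin_less_cos_half_cone_angle by auto
  obtain \<alpha> \<beta> where ab: "0 \<le> \<alpha>" "0 \<le> \<beta>" "cmod (a - u) \<le> \<alpha> + \<beta>"
      "Re (cone_rot m i (a - u)) = (\<alpha> + \<beta>) * c" "Im (cone_rot m i (a - u)) = (\<beta> - \<alpha>) * s"
    using in_cone_cone_rot[OF ua] unfolding c_def s_def by metis
  define Y where "Y = Re (cone_rot m i (w - u))"
  define X where "X = Im (cone_rot m i (w - u))"
  have Y: "(\<alpha> + \<beta>) * c \<le> Y" using near ab(4) unfolding proj_len_eq_Re_cone_rot Y_def by simp
  have "cone_rot m i (w - a) = cone_rot m i (w - u) - cone_rot m i (a - u)"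
    by (simp flip: cone_rot_diff)
  then have "cone_l1 m i (w - a) = \<bar>Y - (\<alpha> + \<beta>) * c\<bar> + \<bar>X - (\<beta> - \<alpha>) * s\<bar>"
    unfolding cone_l1_def Y_def X_def using ab by simp
  also have "\<dots> \<le> (Y - (\<alpha> + \<beta>) * c) + \<bar>X\<bar> + (\<alpha> + \<beta>) * s"
  proof -
    have "\<bar>\<beta> - \<alpha>\<bar> * s \<le> (\<alpha> + \<beta>) * s" using ab cs by (intro mult_right_mono) auto
    then have "\<bar>(\<beta> - \<alpha>) * s\<bar> \<le> (\<alpha> + \<beta>) * s" using cs by (simp add: abs_mult)
    then show ?thesis using Y abs_triangle_ineq4[of X "(\<beta> - \<alpha>) * s"] by linarith
  qed
  finally have "cone_l1 m j (w - a) \<le> (Y - (\<alpha> + \<beta>) * c) + \<bar>X\<bar> + (\<alpha> + \<beta>) * s"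
    using cone_l1_le_cone_l1[OF mK _ aw, of i] K by simp
  moreover have "(c - s) * dist u a \<le> (c - s) * (\<alpha> + \<beta>)"
    using ab(3) cs by (intro mult_left_mono) (auto simp: dist_norm norm_minus_commute)
  moreover have "Y + \<bar>X\<bar> \<le> cone_l1 m i (w - u)" unfolding cone_l1_def Y_def X_def by simp
  ultimately show ?thesis unfolding c_def[symmetric] s_def[symmetric] by (simp add: algebra_simps)
qed

lemma ex_nearest_theta_edge:
  assumes "finite P" "u \<in> P" "w \<in> P" "i < m" "in_cone m i u w"
  obtains a where "theta_edge m P u a" "in_cone m i u a" "proj_len m i u a \<le> proj_len m i u w"
proof -
  define S where "S = {v \<in> P. in_cone m i u v}"
  have "finite S" "w \<in> S" unfolding S_def using assms by auto
  then obtain a where "is_arg_min (proj_len m i u) (\<lambda>v. v \<in> S) a"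
    using ex_is_arg_min_if_finite[of S "proj_len m i u"] by blast
  then have a: "a \<in> S" "\<forall>v \<in> S. proj_len m i u a \<le> proj_len m i u v"
    unfolding is_arg_min_def by (auto simp: not_less)
  then have "theta_edge m P u a"
    unfolding theta_edge_def theta_dedge_def S_def using assms by blast
  then show ?thesis using that a \<open>w \<in> S\<close> unfolding S_def by blast
qed

lemma is_theta_path_Cons:
  assumes "theta_edge m P u a" "is_theta_path m P ps a w"
  shows "is_theta_path m P (u # ps) u w"
proof -
  obtain rest where ps: "ps = a # rest" using assms(2) unfolding is_theta_path_def by (cases ps) auto
  show ?thesis
    unfolding is_theta_path_def
  proof (intro conjI allI impI)
    fix j assume j: "Suc j < length (u # ps)"
    show "theta_edge m P ((u # ps) ! j) ((u # ps) ! Suc j)"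
      using assms j unfolding is_theta_path_def ps by (cases j) auto
  qed (use assms(2) in \<open>auto simp: is_theta_path_def ps\<close>)
qed

lemma is_theta_path_singleton: "is_theta_path m P [w] w w"
  unfolding is_theta_path_def by simp

lemma path_length_Cons: "path_length (u # a # ps) = dist u a + path_length (a # ps)"
  unfolding path_length_def by simp

lemma finite_image_less_induct:
  fixes f :: "'a \<Rightarrow> 'b::linorder"
  assumes fin: "finite (f ` S)" and x: "x \<in> S"
    and step: "\<And>x. x \<in> S \<Longrightarrow> (\<And>y. y \<in> S \<Longrightarrow> f y < f x \<Longrightarrow> Q y) \<Longrightarrow> Q x"
  shows "Q x"
  using x
proof (induction "card {v \<in> f ` S. v < f x}" arbitrary: x rule: less_induct)
  case less
  show ?case
  proof (rule step[OF less.prems])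
    fix y assume "y \<in> S" "f y < f x"
    then have "{v \<in> f ` S. v < f y} \<subset> {v \<in> f ` S. v < f x}" by auto
    then have "card {v \<in> f ` S. v < f y} < card {v \<in> f ` S. v < f x}"
      using fin by (intro psubset_card_mono) auto
    then show "Q y" using less.hyps \<open>y \<in> S\<close> by blast
  qed
qed

lemma theta_path_cone_l1_bound:
  assumes mK: "m = 4 * K" and K: "2 \<le> K" and fin: "finite P"
    and "u \<in> P" "w \<in> P" "i < m" "in_cone m i u w"
  shows "\<exists>ps. is_theta_path m P ps u w \<and>
           (cos (cone_angle m / 2) - sin (cone_angle m / 2)) * path_length ps \<le> cone_l1 m i (w - u)"
proof -
  define C where "C = cos (cone_angle m / 2) - sin (cone_angle m / 2)"
  have m: "2 < m" "4 < m" using mK K by simp_all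
  have C: "0 < C" "C \<le> 1"
    unfolding C_def using sin_less_cos_half_cone_angle[OF m(2)] sin_half_cone_angle_pos[OF m(1)]
      cos_le_one[of "cone_angle m / 2"] by linarith+
  define S where "S = {(u, w, i). u \<in> P \<and> w \<in> P \<and> i < m \<and> in_cone m i u w}"
  define f where "f = (\<lambda>(u, w, i). cone_l1 m i (w - u))"
  have "S \<subseteq> P \<times> P \<times> {..<m}" unfolding S_def by auto
  then have finS: "finite (f ` S)" using fin by (intro finite_imageI) (auto intro: finite_subset)
  have uwi: "(u, w, i) \<in> S" unfolding S_def using assms by simp
  define Q where "Q = (\<lambda>(u, w, i).
    \<exists>ps. is_theta_path m P ps u w \<and> C * path_length ps \<le> cone_l1 m i (w - u))"
  have "Q (u, w, i)"
  proof (rule finite_image_less_induct[OF finS uwi])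
    fix x assume "x \<in> S" and IH: "\<And>y. y \<in> S \<Longrightarrow> f y < f x \<Longrightarrow> Q y"
    obtain u w i where x: "x = (u, w, i)" and uw: "u \<in> P" "w \<in> P" "i < m" "in_cone m i u w"
      using \<open>x \<in> S\<close> unfolding S_def by auto
    obtain a where ua: "theta_edge m P u a" "in_cone m i u a"
        and near: "proj_len m i u a \<le> proj_len m i u w"
      using ex_nearest_theta_edge[OF fin uw] by blast
    have aP: "a \<in> P" using ua(1) uw(1) unfolding theta_edge_def theta_dedge_def by auto
    show "Q x"
    proof (cases "a = w")
      case True
      have "C * path_length [u, w] \<le> dist u w" using C by (simp add: path_length_def mult_left_le_one_le)
      also have "\<dots> \<le> cone_l1 m i (w - u)"
        using norm_le_cone_l1[of "w - u"] by (simp add: dist_norm norm_minus_commute)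
      finally show ?thesis
        using is_theta_path_Cons[OF ua(1) is_theta_path_singleton] True x by (auto simp: Q_def)
    next
      case False
      obtain j where j: "j < m" "in_cone m j a w" using ex_in_cone[OF m(1) False[symmetric]] by blast
      have step: "C * dist u a + cone_l1 m j (w - a) \<le> cone_l1 m i (w - u)"
        unfolding C_def using cone_l1_nearest_step[OF mK K ua(2) j(2) near] .
      have "0 < dist u a" using ua(2) unfolding in_cone_def by auto
      then have "0 < C * dist u a" using C by simp
      then have "f (a, w, j) < f x" using step unfolding f_def x by simp
      moreover have "(a, w, j) \<in> S" unfolding S_def using aP uw j by simp
      ultimately obtain ps where ps: "is_theta_path m P ps a w" "C * path_length ps \<le> cone_l1 m j (w - a)"
        using IH unfolding Q_def by fastforce
      obtain rest where "ps = a # rest" using ps(1) unfolding is_theta_path_def by (cases ps) auto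
      then have "C * path_length (u # ps) = C * dist u a + C * path_length ps"
        by (simp add: path_length_Cons distrib_left)
      then show ?thesis using is_theta_path_Cons[OF ua(1) ps(1)] ps(2) step x by (auto simp: Q_def)
    qed
  qed
  then show ?thesis unfolding Q_def C_def by simp
qed

lemma canonical_midpoint:
  assumes "cos (cone_angle m / 2) \<noteq> 0"
  shows "(canon_far1 m i u w + canon_far2 m i u w) / 2 - u = of_real (proj_len m i u w) * bisector_dir m i"
proof -
  define h where "h = cone_angle m / 2"
  define p where "p = proj_len m i u w"
  have "bdry_dir1 m i + bdry_dir2 m i = of_real (2 * cos h) * bisector_dir m i"
    unfolding bdry_dir1_def bdry_dir2_def bisector_dir_def h_def[symmetric]
    by (simp add: complex_eq_iff cos_diff cos_add sin_diff sin_add)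
  define r where "r = p / cos h"
  have "canon_far1 m i u w + canon_far2 m i u w = 2 * u + of_real r * (bdry_dir1 m i + bdry_dir2 m i)"
    unfolding canon_far1_def canon_far2_def h_def[symmetric] p_def[symmetric] r_def[symmetric]
    by (simp add: algebra_simps)
  also have "\<dots> = 2 * u + of_real (r * (2 * cos h)) * bisector_dir m i"
    unfolding \<open>bdry_dir1 m i + bdry_dir2 m i = _\<close> by (simp add: mult.assoc)
  also have "r * (2 * cos h) = 2 * p"
    using assms unfolding r_def h_def by simp
  finally show ?thesis unfolding p_def by (simp add: field_simps)
qed

lemma
  assumes "0 < t" "d \<noteq> 0"
  shows cos_uangle_bisector: "cos (uangle d (of_real t * bisector_dir m i)) = Re (cone_rot m i d) / cmod d"
    and sin_uangle_bisector: "sin (uangle d (of_real t * bisector_dir m i)) = \<bar>Im (cone_rot m i d)\<bar> / cmod d"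
proof -
  define x where "x = Re (cone_rot m i d) / cmod d"
  have "d \<bullet> (of_real t * bisector_dir m i) = t * Re (cone_rot m i d)"
    by (simp flip: scaleR_conv_of_real add: inner_bisector_dir)
  moreover have "cmod (of_real t * bisector_dir m i) = t"
    using assms unfolding bisector_dir_def by (simp add: norm_mult)
  ultimately have angle: "uangle d (of_real t * bisector_dir m i) = arccos x"
    unfolding uangle_def x_def using assms by simp
  have "\<bar>Re (cone_rot m i d)\<bar> \<le> cmod d" using abs_Re_le_cmod[of "cone_rot m i d"] by simp
  then have x: "-1 \<le> x" "x \<le> 1" unfolding x_def using assms by (auto simp: abs_le_iff field_simps)
  show "cos (uangle d (of_real t * bisector_dir m i)) = Re (cone_rot m i d) / cmod d"
    unfolding angle x_def[symmetric] using x by (simp add: cos_arccos)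
  have "1 - x\<^sup>2 = ((cmod d)\<^sup>2 - (Re (cone_rot m i d))\<^sup>2) / (cmod d)\<^sup>2"
    unfolding x_def using assms by (simp add: field_simps power_divide)
  also have "\<dots> = (Im (cone_rot m i d) / cmod d)\<^sup>2"
    using cmod_power2[of "cone_rot m i d"] by (simp add: power_divide)
  finally have "1 - x\<^sup>2 = (Im (cone_rot m i d) / cmod d)\<^sup>2" .
  then show "sin (uangle d (of_real t * bisector_dir m i)) = \<bar>Im (cone_rot m i d)\<bar> / cmod d"
    unfolding angle using x by (simp add: sin_arccos)
qed

lemma stretch_factor_eq:
  fixes \<alpha> h D :: real
  assumes "0 < cos h" "sin h < cos h"
  shows "(cos \<alpha> / cos h + (cos \<alpha> * tan h + sin \<alpha>) / (cos h - sin h)) * D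
           = (D * cos \<alpha> + D * sin \<alpha>) / (cos h - sin h)"
  using assms by (simp add: tan_def field_simps)

theorem mainTheorem8:
  fixes k m :: nat and P :: "complex set" and u w :: complex
  assumes "k \<ge> 1" and "m = 4 * k + 4"
    and "finite P" and "general_position m P"
    and "u \<in> P" and "w \<in> P" and "u \<noteq> w"
    and "i < m" and "in_cone m i u w"
  shows "let \<theta> = cone_angle m;
             M = (canon_far1 m i u w + canon_far2 m i u w) / 2;
             \<alpha> = uangle (w - u) (M - u)
         in \<exists>ps. is_theta_path m P ps u w \<and>
              path_length ps \<le> (cos \<alpha> / cos (\<theta> / 2)
                 + (cos \<alpha> * tan (\<theta> / 2) + sin \<alpha>) / (cos (\<theta> / 2) - sin (\<theta> / 2))) * dist u w"
proof -
  define h where "h = cone_angle m / 2"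
  define z where "z = cone_rot m i (w - u)"
  have mK: "m = 4 * (k + 1)" and m: "2 < m" "4 < m" using assms(1,2) by simp_all
  have ch: "0 < cos h" "sin h < cos h"
    unfolding h_def using cos_half_cone_angle_pos[OF m(1)] sin_less_cos_half_cone_angle[OF m(2)] .
  obtain ps where ps: "is_theta_path m P ps u w" "(cos h - sin h) * path_length ps \<le> cone_l1 m i (w - u)"
    using theta_path_cone_l1_bound[OF mK _ assms(3,5,6,8,9)] assms(1) unfolding h_def by auto
  have Re: "0 < Re z" unfolding z_def using Re_cone_rot_pos[OF m(1) assms(9)] .
  have M: "(canon_far1 m i u w + canon_far2 m i u w) / 2 - u = of_real (Re z) * bisector_dir m i"
    using canonical_midpoint[of m i u w] ch(1) unfolding h_def z_def proj_len_eq_Re_cone_rot by simp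
  define \<alpha> where "\<alpha> = uangle (w - u) (of_real (Re z) * bisector_dir m i)"
  have "dist u w = cmod (w - u)" and "w - u \<noteq> 0"
    using assms(7) by (simp_all add: dist_norm norm_minus_commute)
  then have "dist u w * cos \<alpha> = Re z" "dist u w * sin \<alpha> = \<bar>Im z\<bar>"
    unfolding \<alpha>_def cos_uangle_bisector[OF Re \<open>w - u \<noteq> 0\<close>] sin_uangle_bisector[OF Re \<open>w - u \<noteq> 0\<close>]
    by (simp_all add: z_def)
  then have "(cos \<alpha> / cos h + (cos \<alpha> * tan h + sin \<alpha>) / (cos h - sin h)) * dist u w
               = cone_l1 m i (w - u) / (cos h - sin h)"
    unfolding stretch_factor_eq[OF ch] cone_l1_def z_def[symmetric] using Re by simp
  then show ?thesis
    using ps ch unfolding Let_def M \<alpha>_def[symmetric] h_def[symmetric]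
    by (intro exI[of _ ps]) (auto simp: pos_le_divide_eq mult.commute)
qed

end
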